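(* Assume $X_t>0$ for all $t\in\mathcal T$ and let $\alpha=\sum_tY_t/X_t$. Then $\max_{\delta\in[0,1]}\delta\big(1-\frac{\delta}{2}\alpha\big)=L(\alpha)$, attained at $\delta=\min\{1/\alpha,1\}$. Consequently, in the weakest-link game, any strategy $F^*_{\mathcal X}\in\mathbb F(\boldsymbol X)$ whose $c$-marginals are, for all $c$ and $\boldsymbol u\in\mathbb R^T_{\ge0}$, $F^*_{\mathcal X,c}(\boldsymbol u)=\min_t\min\{\frac{u_t}{2v_cX_t},1\}$ if $\alpha\le1$, and $F^*_{\mathcal X,c}(\boldsymbol u)=1-\frac1\alpha+\frac1\alpha\min_t\min\{\frac{u_t}{2v_cX_t\alpha},1\}$ if $\alpha>1$, satisfies $\pi_{\mathcal X}(F^*_{\mathcal X},F_{\mathcal Y})\ge L(\alpha)$ for every $F_{\mathcal Y}\in\mathbb F(\boldsymbol Y)$.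
   Context: Contests $\mathcal C=\{1,\dots,C\}$ with values $v_c>0$, $\sum_cv_c=1$; types $\mathcal T=\{1,\dots,T\}$; $\boldsymbol Y\in\mathbb R^T_{\ge0}$. $\mathbb F(\boldsymbol X)$ is the set of probability distributions $F$ on $\mathbb R^{CT}_{\ge0}$ (points $\mathbf x=(\boldsymbol x_c)_c$, $\boldsymbol x_c=(x_{c,t})_t$) with $\mathbb E_{\mathbf x\sim F}[\sum_cx_{c,t}]\le X_t$ for all $t$; similarly $\mathbb F(\boldsymbol Y)$. $c$-marginal: $F_c(\boldsymbol u)=\mathbb P_{\mathbf x\sim F}[x_{c,t}\le u_t\ \forall t]$. Weakest-link rule $W_{\mathrm{WL}}(\boldsymbol x,\boldsymbol y)=\mathbf 1\{x_t\ge y_t\ \forall t\}$; $\pi_{\mathcal X}(F_{\mathcal X},F_{\mathcal Y})=\mathbb E[\sum_cv_cW_{\mathrm{WL}}(\boldsymbol x_c,\boldsymbol y_c)]$ with independent $\mathbf x\sim F_{\mathcal X}$, $\mathbf y\sim F_{\mathcal Y}$. $L(\alpha)=1-\alpha/2$ for $\alpha\le1$, $L(\alpha)=1/(2\alpha)$ for $\alpha>1$. *)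

theory Defs
  imports "HOL-Probability.Probability"
begin

text \<open>Contests are the elements of a finite type 'c, resource types the elements of a
finite type 't. A pure allocation is a point x :: 'c => 't => real, x c t = x_{c,t}.\<close>

definition alloc_space :: "('c::finite \<Rightarrow> 't::finite \<Rightarrow> real) measure" where
  "alloc_space = (\<Pi>\<^sub>M c\<in>UNIV. \<Pi>\<^sub>M t\<in>UNIV. (borel :: real measure))"

definition strategies :: "('t::finite \<Rightarrow> real) \<Rightarrow> ('c::finite \<Rightarrow> 't \<Rightarrow> real) measure set" where
  "strategies B = {F. prob_space F \<and> sets F = sets alloc_space
      \<and> (AE x in F. \<forall>c t. 0 \<le> x c t)
      \<and> (\<forall>t. (\<integral>\<^sup>+ x. ennreal (\<Sum>c\<in>UNIV. x c t) \<partial>F) \<le> ennreal (B t))}"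

definition marginal :: "('c::finite \<Rightarrow> 't::finite \<Rightarrow> real) measure \<Rightarrow> 'c \<Rightarrow> ('t \<Rightarrow> real) \<Rightarrow> real" where
  "marginal F c u = measure F {x \<in> space F. \<forall>t. x c t \<le> u t}"

definition W_WL :: "('t \<Rightarrow> real) \<Rightarrow> ('t \<Rightarrow> real) \<Rightarrow> real" where
  "W_WL x y = (if \<forall>t. y t \<le> x t then 1 else 0)"

definition payoff_X :: "('c::finite \<Rightarrow> real) \<Rightarrow> ('c \<Rightarrow> 't::finite \<Rightarrow> real) measure
      \<Rightarrow> ('c \<Rightarrow> 't \<Rightarrow> real) measure \<Rightarrow> real" where
  "payoff_X v FX FY = (\<integral> z. (\<Sum>c\<in>UNIV. v c * W_WL (fst z c) (snd z c)) \<partial>(FX \<Otimes>\<^sub>M FY))"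

definition L :: "real \<Rightarrow> real" where
  "L \<alpha> = (if \<alpha> \<le> 1 then 1 - \<alpha> / 2 else 1 / (2 * \<alpha>))"

end

theory Submission
  imports Defs
begin

text \<open>Write the marginals of F_X as p0 + w Min_t min (u_t / K_{c,t}) 1 with K_{c,t} = 2 v_c X_t \<beta>,
where (p0, w, \<beta>) = (0, 1, 1) if \<alpha> \<le> 1 and (1 - 1/\<alpha>, 1/\<alpha>, \<alpha>) otherwise. Against a fixed
allocation y, player X loses contest c only if some x_{c,t} lies below y_{c,t}; the atom at the
origin has mass p0 and each one-dimensional marginal grows with slope w / K_{c,t}, so the union
bound over the types gives a winning probability of at least 1 - p0 - w \<Sum>_t y_{c,t} / K_{c,t}.
This bound is linear in y, so averaging over y ~ F_Y only involves the budgets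
E[\<Sum>_c y_{c,t}] \<le> Y_t, and yields 1 - p0 - w \<alpha> / (2 \<beta>) = L(\<alpha>).\<close>

lemma delta_objective_le_L:
  fixes a \<delta> :: real
  assumes "a \<ge> 0" and "\<delta> \<in> {0..1}"
  shows "\<delta> * (1 - \<delta> / 2 * a) \<le> L a"
proof (cases "a \<le> 1")
  case True
  have "a * (1 + \<delta>) \<le> 1 * 2" using True assms by (intro mult_mono) auto
  then have "(1 - \<delta>) * (1 - a * (1 + \<delta>) / 2) \<ge> 0"
    using assms by (intro mult_nonneg_nonneg) auto
  moreover have "(1 - \<delta>) * (1 - a * (1 + \<delta>) / 2) = (1 - a / 2) - \<delta> * (1 - \<delta> / 2 * a)"
    by (simp add: field_simps)
  ultimately show ?thesis using True by (simp add: L_def)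
next
  case False
  have "(a * \<delta> - 1)\<^sup>2 / (2 * a) = 1 / (2 * a) - \<delta> * (1 - \<delta> / 2 * a)"
    using False by (simp add: field_simps power2_eq_square)
  moreover have "(a * \<delta> - 1)\<^sup>2 / (2 * a) \<ge> 0" using False by simp
  ultimately show ?thesis using False by (simp add: L_def)
qed

lemma delta_objective_optimum:
  fixes a :: real
  assumes "a \<ge> 0"
  defines "\<delta>0 \<equiv> if a \<le> 1 then 1 else 1 / a"
  shows "\<delta>0 \<in> {0..1}" and "\<delta>0 * (1 - \<delta>0 / 2 * a) = L a"
  using assms by (auto simp: \<delta>0_def L_def field_simps)

lemma measurable_alloc_component:
  assumes "sets M = sets (alloc_space :: ('c::finite \<Rightarrow> 't::finite \<Rightarrow> real) measure)"
  shows "(\<lambda>x. x c t) \<in> borel_measurable M"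
proof -
  have "(\<lambda>x. x c t) \<in> borel_measurable (alloc_space :: ('c \<Rightarrow> 't \<Rightarrow> real) measure)"
    unfolding alloc_space_def
    by (rule measurable_compose[of "\<lambda>x. x c" _ _ "\<lambda>y. y t"]; rule measurable_component_singleton; simp)
  then show ?thesis using measurable_cong_sets[OF assms refl] by blast
qed

lemma strategy_expected_total:
  assumes F: "F \<in> strategies B" and B: "B t \<ge> 0"
  shows "integrable F (\<lambda>y. \<Sum>c\<in>UNIV. y c t)" and "(\<integral>y. (\<Sum>c\<in>UNIV. y c t) \<partial>F) \<le> B t"
proof -
  have sets: "sets F = sets alloc_space" and nonneg: "AE y in F. \<forall>c t. 0 \<le> y c t"
    and budget: "(\<integral>\<^sup>+ y. ennreal (\<Sum>c\<in>UNIV. y c t) \<partial>F) \<le> ennreal (B t)"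
    using F by (auto simp: strategies_def)
  have [measurable]: "(\<lambda>x. x c t) \<in> borel_measurable F" for c t
    using measurable_alloc_component[OF sets] .
  have total_nonneg: "AE y in F. 0 \<le> (\<Sum>c\<in>UNIV. y c t)"
    using nonneg by eventually_elim (auto intro: sum_nonneg)
  have "(\<integral>\<^sup>+ y. ennreal (norm (\<Sum>c\<in>UNIV. y c t)) \<partial>F)
      = (\<integral>\<^sup>+ y. ennreal (\<Sum>c\<in>UNIV. y c t) \<partial>F)"
    using total_nonneg by (auto intro!: nn_integral_cong_AE elim!: eventually_mono)
  also have "\<dots> < \<infinity>"
    using le_less_trans[OF budget ennreal_less_top] by (simp add: infinity_ennreal_def)
  finally show "integrable F (\<lambda>y. \<Sum>c\<in>UNIV. y c t)"
    by (intro integrableI_bounded) measurable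
  have "(\<integral>y. (\<Sum>c\<in>UNIV. y c t) \<partial>F) = enn2real (\<integral>\<^sup>+ y. ennreal (\<Sum>c\<in>UNIV. y c t) \<partial>F)"
    using total_nonneg by (intro integral_eq_nn_integral) auto
  also have "\<dots> \<le> B t" by (rule enn2real_leI[OF B budget])
  finally show "(\<integral>y. (\<Sum>c\<in>UNIV. y c t) \<partial>F) \<le> B t" .
qed

context
  fixes M :: "('c::finite \<Rightarrow> 't::finite \<Rightarrow> real) measure" and c :: 'c
    and p0 w :: real and K :: "'t \<Rightarrow> real"
  assumes prob: "prob_space M" and sets: "sets M = sets alloc_space"
    and marg: "\<And>u. (\<forall>t. 0 \<le> u t) \<Longrightarrow>
                 marginal M c u = p0 + w * Min (range (\<lambda>t. min (u t / K t) 1))"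
    and K_pos: "\<And>t. K t > 0" and w_nonneg: "w \<ge> 0" and p0_w: "p0 + w = 1"
begin

interpretation prob_space M by (fact prob)

declare measurable_alloc_component[OF sets, measurable]

lemma prob_component_le:
  assumes "r \<ge> 0"
  shows "prob {x\<in>space M. x c t \<le> r} \<le> p0 + w * (r / K t)"
proof -
  define b where "b = (\<Sum>s\<in>UNIV. K s)"
  have K_le_b: "K s \<le> b" for s
    unfolding b_def by (rule member_le_sum) (auto intro: less_imp_le K_pos)
  have b_pos: "b > 0" using K_le_b[of t] K_pos[of t] by linarith
  define C where "C = {x\<in>space M. \<forall>s. x c s \<le> b}"
  have [measurable]: "C \<in> sets M" unfolding C_def by measurable
  have "prob C = p0 + w * Min (range (\<lambda>s. min (b / K s) 1))"
    using marg[of "\<lambda>_. b"] b_pos unfolding C_def marginal_def by simp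
  also have "(\<lambda>s. min (b / K s) 1) = (\<lambda>_. 1)"
  proof
    fix s show "min (b / K s) 1 = 1" using K_le_b[of s] K_pos[of s] by (simp add: min_def field_simps)
  qed
  finally have "prob (space M - C) = 0" using p0_w by (simp add: prob_compl)
  define u where "u = (\<lambda>s. if s = t then r else b)"
  have u_nonneg: "\<forall>s. 0 \<le> u s" using assms b_pos by (auto simp: u_def)
  have "{x\<in>space M. x c t \<le> r} \<subseteq> {x\<in>space M. \<forall>s. x c s \<le> u s} \<union> (space M - C)"
    unfolding C_def u_def by auto
  then have "prob {x\<in>space M. x c t \<le> r}
      \<le> prob {x\<in>space M. \<forall>s. x c s \<le> u s} + prob (space M - C)"
    by (intro order_trans[OF finite_measure_mono measure_Un_le]) measurable
  also have "\<dots> = marginal M c u" using \<open>prob (space M - C) = 0\<close> by (simp add: marginal_def)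
  also have "\<dots> = p0 + w * Min (range (\<lambda>s. min (u s / K s) 1))" using marg u_nonneg by blast
  also have "Min (range (\<lambda>s. min (u s / K s) 1)) \<le> r / K t"
    by (rule order_trans[OF Min_le]) (auto simp: u_def)
  finally show ?thesis using w_nonneg by (simp add: mult_left_mono)
qed

lemma prob_dominates_ge:
  assumes y_nonneg: "\<And>t. y t \<ge> 0"
  shows "prob {x\<in>space M. \<forall>t. y t \<le> x c t} \<ge> 1 - p0 - w * (\<Sum>t\<in>UNIV. y t / K t)"
proof -
  define Win where "Win = {x\<in>space M. \<forall>t. y t \<le> x c t}"
  define A where "A = {x\<in>space M. \<forall>s. x c s \<le> 0}"
  define B where "B t = {x\<in>space M. x c t \<le> y t}" for t
  have [measurable]: "Win \<in> sets M" "A \<in> sets M" "B t \<in> sets M" for t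
    unfolding Win_def A_def B_def by measurable
  have prob_A: "prob A = p0" using marg[of "\<lambda>_. 0"] unfolding A_def marginal_def by simp
  have prob_B_minus_A: "prob (B t - A) \<le> w * (y t / K t)" for t
  proof -
    have "A \<subseteq> B t" unfolding A_def B_def using y_nonneg by (auto intro: order_trans)
    then have "prob (B t - A) = prob (B t) - p0" using prob_A by (subst finite_measure_Diff) auto
    moreover have "prob (B t) \<le> p0 + w * (y t / K t)"
      unfolding B_def by (rule prob_component_le) (rule y_nonneg)
    ultimately show ?thesis by simp
  qed
  have "space M - Win \<subseteq> A \<union> (\<Union>t. B t - A)"
    unfolding Win_def A_def B_def by (auto simp: not_le) (meson less_le_not_le)
  then have "prob (space M - Win) \<le> prob A + prob (\<Union>t. B t - A)"
    by (intro order_trans[OF finite_measure_mono measure_Un_le]) measurable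
  also have "prob (\<Union>t. B t - A) \<le> (\<Sum>t\<in>UNIV. prob (B t - A))"
    by (intro finite_measure_subadditive_finite) auto
  also have "\<dots> \<le> (\<Sum>t\<in>UNIV. w * (y t / K t))" by (intro sum_mono prob_B_minus_A)
  finally show ?thesis
    using prob_A by (simp add: prob_compl Win_def sum_distrib_left)
qed

end

lemma integral_sum_W_WL:
  fixes M :: "('c::finite \<Rightarrow> 't::finite \<Rightarrow> real) measure"
  assumes "finite_measure M" and sets: "sets M = sets alloc_space"
  shows "(\<integral>x. (\<Sum>c\<in>UNIV. v c * W_WL (x c) (y c)) \<partial>M)
       = (\<Sum>c\<in>UNIV. v c * measure M {x\<in>space M. \<forall>t. y c t \<le> x c t})"
proof -
  interpret finite_measure M by fact
  have [measurable]: "(\<lambda>x. x c t) \<in> borel_measurable M" for c t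
    using measurable_alloc_component[OF sets] .
  let ?Win = "\<lambda>c. {x\<in>space M. \<forall>t. y c t \<le> x c t}"
  have [measurable]: "?Win c \<in> sets M" for c by measurable
  have "(\<integral>x. (\<Sum>c\<in>UNIV. v c * W_WL (x c) (y c)) \<partial>M)
      = (\<integral>x. (\<Sum>c\<in>UNIV. v c * indicator (?Win c) x) \<partial>M)"
    by (intro Bochner_Integration.integral_cong refl sum.cong) (simp add: W_WL_def indicator_def)
  also have "\<dots> = (\<Sum>c\<in>UNIV. (\<integral>x. v c * indicator (?Win c) x \<partial>M))"
    by (rule Bochner_Integration.integral_sum) (auto simp: emeasure_eq_measure)
  also have "\<dots> = (\<Sum>c\<in>UNIV. v c * measure M (?Win c))"
    by (intro sum.cong refl) (simp add: Int_absorb2)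
  finally show ?thesis .
qed

lemma payoff_X_iterated:
  fixes FX FY :: "('c::finite \<Rightarrow> 't::finite \<Rightarrow> real) measure" and v :: "'c \<Rightarrow> real"
  assumes "prob_space FX" "prob_space FY"
    and sets_X: "sets FX = sets alloc_space" and sets_Y: "sets FY = sets alloc_space"
  defines "g \<equiv> \<lambda>y. \<integral>x. (\<Sum>c\<in>UNIV. v c * W_WL (x c) (y c)) \<partial>FX"
  shows "payoff_X v FX FY = (\<integral>y. g y \<partial>FY)" and "integrable FY g"
proof -
  interpret pair_prob_space FX FY
    using assms by (simp add: pair_prob_space_def pair_sigma_finite_def prob_space_imp_sigma_finite)
  have [measurable]: "(\<lambda>x. x c t) \<in> borel_measurable FX" "(\<lambda>x. x c t) \<in> borel_measurable FY" for c t
    using measurable_alloc_component[OF sets_X] measurable_alloc_component[OF sets_Y] by auto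
  define f where "f x y = (\<Sum>c\<in>UNIV. v c * W_WL (x c) (y c))"
    for x y :: "'c \<Rightarrow> 't \<Rightarrow> real"
  have "case_prod f \<in> borel_measurable (FX \<Otimes>\<^sub>M FY)" unfolding f_def W_WL_def by measurable
  moreover have "norm (f x y) \<le> (\<Sum>c\<in>UNIV. \<bar>v c\<bar>)" for x y
    unfolding f_def by (rule order_trans[OF norm_sum]) (intro sum_mono, simp add: W_WL_def)
  ultimately have f_int: "integrable (FX \<Otimes>\<^sub>M FY) (case_prod f)"
    by (intro P.integrable_const_bound[where B="\<Sum>c\<in>UNIV. \<bar>v c\<bar>"]) auto
  show "payoff_X v FX FY = (\<integral>y. g y \<partial>FY)"
    using integral_snd[OF f_int] by (simp add: payoff_X_def f_def g_def split_beta')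
  show "integrable FY g" using integrable_snd[OF f_int] by (simp add: f_def g_def split_beta')
qed

context
  fixes v :: "'c::finite \<Rightarrow> real" and X :: "'t::finite \<Rightarrow> real"
    and FX :: "('c \<Rightarrow> 't \<Rightarrow> real) measure" and p0 w \<beta> :: real
  assumes v_pos: "\<And>c. v c > 0" and v_sum: "(\<Sum>c\<in>UNIV. v c) = 1"
    and X_pos: "\<And>t. X t > 0" and \<beta>_pos: "\<beta> > 0"
    and w_nonneg: "w \<ge> 0" and p0_w: "p0 + w = 1"
    and prob_X: "prob_space FX" and sets_X: "sets FX = sets alloc_space"
    and marg: "\<And>c u. (\<forall>t. 0 \<le> u t) \<Longrightarrow>
       marginal FX c u = p0 + w * Min (range (\<lambda>t. min (u t / (2 * v c * X t * \<beta>)) 1))"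
begin

lemma payoff_against_allocation_ge:
  assumes y_nonneg: "\<And>c t. y c t \<ge> 0"
  shows "1 - p0 - w * (\<Sum>t\<in>UNIV. (\<Sum>c\<in>UNIV. y c t) / (2 * X t * \<beta>))
       \<le> (\<integral>x. (\<Sum>c\<in>UNIV. v c * W_WL (x c) (y c)) \<partial>FX)"
proof -
  have scale: "v c * (\<Sum>t\<in>UNIV. y c t / (2 * v c * X t * \<beta>)) = (\<Sum>t\<in>UNIV. y c t / (2 * X t * \<beta>))"
    for c using v_pos[of c] unfolding sum_distrib_left by (intro sum.cong) auto
  have "1 - p0 - w * (\<Sum>t\<in>UNIV. (\<Sum>c\<in>UNIV. y c t) / (2 * X t * \<beta>))
      = (\<Sum>c\<in>UNIV. v c) * (1 - p0) - w * (\<Sum>c\<in>UNIV. \<Sum>t\<in>UNIV. y c t / (2 * X t * \<beta>))"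
    unfolding sum_divide_distrib v_sum by (subst sum.swap) simp
  also have "\<dots> = (\<Sum>c\<in>UNIV. v c * (1 - p0) - w * (v c * (\<Sum>t\<in>UNIV. y c t / (2 * v c * X t * \<beta>))))"
    unfolding scale by (simp only: sum_subtractf sum_distrib_left sum_distrib_right)
  also have "\<dots> = (\<Sum>c\<in>UNIV. v c * (1 - p0 - w * (\<Sum>t\<in>UNIV. y c t / (2 * v c * X t * \<beta>))))"
    by (intro sum.cong refl) (simp add: algebra_simps)
  also have "\<dots> \<le> (\<Sum>c\<in>UNIV. v c * measure FX {x\<in>space FX. \<forall>t. y c t \<le> x c t})"
  proof (intro sum_mono mult_left_mono)
    fix c
    show "1 - p0 - w * (\<Sum>t\<in>UNIV. y c t / (2 * v c * X t * \<beta>))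
        \<le> measure FX {x\<in>space FX. \<forall>t. y c t \<le> x c t}"
      by (rule prob_dominates_ge[OF prob_X sets_X marg _ w_nonneg p0_w])
        (use y_nonneg v_pos X_pos \<beta>_pos in auto)
  qed (use v_pos in \<open>simp add: less_imp_le\<close>)
  also have "\<dots> = (\<integral>x. (\<Sum>c\<in>UNIV. v c * W_WL (x c) (y c)) \<partial>FX)"
    using integral_sum_W_WL[OF prob_space.finite_measure[OF prob_X] sets_X] by simp
  finally show ?thesis .
qed

lemma payoff_X_ge:
  assumes FY: "FY \<in> strategies Y" and Y_nonneg: "\<And>t. Y t \<ge> 0"
  shows "1 - p0 - w * ((\<Sum>t\<in>UNIV. Y t / X t) / (2 * \<beta>)) \<le> payoff_X v FX FY"
proof -
  have prob_Y: "prob_space FY" and sets_Y: "sets FY = sets alloc_space"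
    and nonneg_Y: "AE y in FY. \<forall>c t. 0 \<le> y c t"
    using FY by (auto simp: strategies_def)
  interpret Y: prob_space FY by (fact prob_Y)
  define h where "h y = 1 - p0 - w * (\<Sum>t\<in>UNIV. (\<Sum>c\<in>UNIV. y c t) / (2 * X t * \<beta>))"
    for y :: "'c \<Rightarrow> 't \<Rightarrow> real"
  have total_int: "integrable FY (\<lambda>y. \<Sum>c\<in>UNIV. y c t)" for t
    using strategy_expected_total(1)[OF FY Y_nonneg] .
  have "(\<Sum>t\<in>UNIV. Y t / X t) / (2 * \<beta>) = (\<Sum>t\<in>UNIV. Y t / (2 * X t * \<beta>))"
    unfolding sum_divide_distrib by (intro sum.cong refl) (simp add: field_simps)
  then have "1 - p0 - w * ((\<Sum>t\<in>UNIV. Y t / X t) / (2 * \<beta>))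
      = 1 - p0 - w * (\<Sum>t\<in>UNIV. Y t / (2 * X t * \<beta>))"
    by simp
  also have "\<dots> \<le> 1 - p0 - w * (\<Sum>t\<in>UNIV. (\<integral>y. (\<Sum>c\<in>UNIV. y c t) \<partial>FY) / (2 * X t * \<beta>))"
    using strategy_expected_total(2)[OF FY Y_nonneg] X_pos \<beta>_pos w_nonneg
    by (intro diff_left_mono mult_left_mono sum_mono divide_right_mono) (auto intro: less_imp_le)
  also have "\<dots> = (\<integral>y. h y \<partial>FY)"
    using total_int by (simp add: h_def integral_diff integral_sum Y.prob_space)
  also have "\<dots> \<le> payoff_X v FX FY"
    unfolding payoff_X_iterated(1)[OF prob_X prob_Y sets_X sets_Y]
    using nonneg_Y total_int payoff_X_iterated(2)[OF prob_X prob_Y sets_X sets_Y]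
    by (intro integral_mono_AE) (auto simp: h_def payoff_against_allocation_ge elim: eventually_mono)
  finally show ?thesis .
qed

end

theorem lemma6:
  fixes v :: "'c::finite \<Rightarrow> real" and X Y :: "'t::finite \<Rightarrow> real"
    and FX FY :: "('c \<Rightarrow> 't \<Rightarrow> real) measure"
  assumes v_pos: "\<And>c. v c > 0" and v_sum: "(\<Sum>c\<in>UNIV. v c) = 1"
    and X_pos: "\<And>t. X t > 0" and Y_nonneg: "\<And>t. Y t \<ge> 0"
    and FX: "FX \<in> strategies X"
    and FX_marg: "\<And>c u. (\<forall>t. 0 \<le> u t) \<Longrightarrow>
       marginal FX c u =
         (if (\<Sum>t\<in>UNIV. Y t / X t) \<le> 1
          then Min (range (\<lambda>t. min (u t / (2 * v c * X t)) 1))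
          else 1 - 1 / (\<Sum>t\<in>UNIV. Y t / X t) + 1 / (\<Sum>t\<in>UNIV. Y t / X t) *
                 Min (range (\<lambda>t. min (u t / (2 * v c * X t * (\<Sum>t\<in>UNIV. Y t / X t))) 1)))"
    and FY: "FY \<in> strategies Y"
  shows "(let \<alpha> = (\<Sum>t\<in>UNIV. Y t / X t);
              \<delta>0 = (if \<alpha> \<le> 1 then 1 else 1 / \<alpha>)
          in (\<forall>\<delta>\<in>{0..1}. \<delta> * (1 - \<delta> / 2 * \<alpha>) \<le> L \<alpha>)
             \<and> \<delta>0 \<in> {0..1} \<and> \<delta>0 * (1 - \<delta>0 / 2 * \<alpha>) = L \<alpha>
             \<and> payoff_X v FX FY \<ge> L \<alpha>)"
proof -
  define \<alpha> where "\<alpha> = (\<Sum>t\<in>UNIV. Y t / X t)"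
  have \<alpha>_nonneg: "\<alpha> \<ge> 0"
    unfolding \<alpha>_def using X_pos Y_nonneg by (intro sum_nonneg) (simp add: less_imp_le)
  define p0 where "p0 = (if \<alpha> \<le> 1 then 0 else 1 - 1 / \<alpha>)"
  define w where "w = (if \<alpha> \<le> 1 then 1 else 1 / \<alpha>)"
  define \<beta> where "\<beta> = (if \<alpha> \<le> 1 then 1 else \<alpha>)"
  have params: "\<beta> > 0" "w \<ge> 0" "p0 + w = 1" "1 - p0 - w * (\<alpha> / (2 * \<beta>)) = L \<alpha>"
    using \<alpha>_nonneg by (auto simp: p0_def w_def \<beta>_def L_def field_simps)
  have "marginal FX c u = p0 + w * Min (range (\<lambda>t. min (u t / (2 * v c * X t * \<beta>)) 1))"
    if "\<forall>t. 0 \<le> u t" for c u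
    using FX_marg[OF that] by (simp add: \<alpha>_def[symmetric] p0_def w_def \<beta>_def)
  with FX have "1 - p0 - w * (\<alpha> / (2 * \<beta>)) \<le> payoff_X v FX FY"
    unfolding \<alpha>_def strategies_def
    by (intro payoff_X_ge[OF v_pos v_sum X_pos params(1-3) _ _ _ FY Y_nonneg]) auto
  then show ?thesis
    using delta_objective_le_L[OF \<alpha>_nonneg] delta_objective_optimum[OF \<alpha>_nonneg] params(4)
    by (simp add: \<alpha>_def[symmetric] Let_def)
qed

end
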